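(* In the two-source model, let $t\in\mathbb N$ and let $(U_t,X_t,Q_t)$ be any joint distribution (with the given marginal of $(U_t,X_t)$) such that $X_t\in Q_t$ almost surely and $Q_t$ is independent of $U_t$. Then $$\mathbb E|Q_t|\;\ge\;2-\pi_t(A)-\pi_t(B).$$ Consequently, any scheme satisfying decodability and the privacy constraint $I(X_{\mathcal B_t};Q_0,\dots,Q_t)=0$ has $1/R_t\ge 2-\pi_t(A)-\pi_t(B)$.
   Context: Requests $X_t\in\{A,B\}$, $t\ge0$, form a Markov chain with transition matrix $M$; privacy modes $F_t$ are a known sequence with $F_0=\mathrm{ON}$. Queries take values in $\{\{A\},\{B\},\{A,B\}\}$ with download cost $|Q_t|L$, and the rate satisfies $R_t\le L/(L\,\mathbb E|Q_t|)$. $\mathcal B_t=\{i\le t: F_i=\mathrm{ON}\}\cup\{i: i\ge t+1\}$, $F^-(t)=\max\{i\le t: F_i=\mathrm{ON}\}$, $U_t=(X_{F^-(t)},X_{t+1})$ (note $F^-(t),t+1\in\mathcal B_t$), $p(x\mid u)=P(X_t=x\mid U_t=u)$, and $\pi_t(x)=\min_u p(x\mid u)$ over $u\in\{A,B\}^2$ with $P(U_t=u)>0$. *)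

theory Defs
  imports "HOL-Probability.Probability"
begin

datatype req = A | B

text \<open>Privacy modes: F i = True means ON.\<close>

definition Fminus :: "(nat \<Rightarrow> bool) \<Rightarrow> nat \<Rightarrow> nat" where
  "Fminus F t = (GREATEST i. i \<le> t \<and> F i)"

definition Bset :: "(nat \<Rightarrow> bool) \<Rightarrow> nat \<Rightarrow> nat set" where
  "Bset F t = {i. i \<le> t \<and> F i} \<union> {i. t + 1 \<le> i}"

definition Ut :: "(nat \<Rightarrow> bool) \<Rightarrow> (nat \<Rightarrow> 'w \<Rightarrow> req) \<Rightarrow> nat \<Rightarrow> 'w \<Rightarrow> req \<times> req" where
  "Ut F X t = (\<lambda>w. (X (Fminus F t) w, X (Suc t) w))"

definition markov_chain :: "'w measure \<Rightarrow> (nat \<Rightarrow> 'w \<Rightarrow> req) \<Rightarrow> (req \<Rightarrow> req \<Rightarrow> real) \<Rightarrow> bool" where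
  "markov_chain M X T \<longleftrightarrow>
     (\<forall>n (xs::req list) y. length xs = Suc n \<longrightarrow>
        measure M {w \<in> space M. (\<forall>i\<le>n. X i w = xs ! i) \<and> X (Suc n) w = y}
        = measure M {w \<in> space M. \<forall>i\<le>n. X i w = xs ! i} * T (xs ! n) y)"

definition stochastic_matrix :: "(req \<Rightarrow> req \<Rightarrow> real) \<Rightarrow> bool" where
  "stochastic_matrix T \<longleftrightarrow> (\<forall>x y. 0 \<le> T x y) \<and> (\<forall>x. T x A + T x B = 1)"

definition cond_p :: "'w measure \<Rightarrow> (nat \<Rightarrow> bool) \<Rightarrow> (nat \<Rightarrow> 'w \<Rightarrow> req) \<Rightarrow> nat \<Rightarrow> req \<Rightarrow> req \<times> req \<Rightarrow> real" where
  "cond_p M F X t x u =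
     measure M {w \<in> space M. X t w = x \<and> Ut F X t w = u} / measure M {w \<in> space M. Ut F X t w = u}"

definition pi_t :: "'w measure \<Rightarrow> (nat \<Rightarrow> bool) \<Rightarrow> (nat \<Rightarrow> 'w \<Rightarrow> req) \<Rightarrow> nat \<Rightarrow> req \<Rightarrow> real" where
  "pi_t M F X t x =
     Min {cond_p M F X t x u | u. 0 < measure M {w \<in> space M. Ut F X t w = u}}"

text \<open>Independence of two random variables with (possibly) different value spaces
  (the library's indep_var requires equal value types).\<close>
definition indep_rv :: "'w measure \<Rightarrow> 'a measure \<Rightarrow> ('w \<Rightarrow> 'a) \<Rightarrow> 'b measure \<Rightarrow> ('w \<Rightarrow> 'b) \<Rightarrow> bool" where
  "indep_rv M Ma X Mb Y \<longleftrightarrow>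
     (\<forall>S\<in>sets Ma. \<forall>S'\<in>sets Mb.
        measure M (X -` S \<inter> Y -` S' \<inter> space M)
        = measure M (X -` S \<inter> space M) * measure M (Y -` S' \<inter> space M))"

definition valid_query :: "req set \<Rightarrow> bool" where
  "valid_query q \<longleftrightarrow> q \<in> {{A}, {B}, {A, B}}"

end

theory Submission
  imports Defs
begin

text \<open>A valid query has size 2 unless it is a singleton, so
  \<open>\<bbbE>|Q| = 2 - P(Q = {A}) - P(Q = {B})\<close>. Since \<open>X\<^sub>t \<in> Q\<close> almost surely and
  \<open>Q\<close> is independent of \<open>U\<^sub>t\<close>, for every \<open>u\<close> with \<open>P(U\<^sub>t = u) > 0\<close>
  we get \<open>P(Q = {x}) P(U\<^sub>t = u) = P(Q = {x}, U\<^sub>t = u) \<le> P(X\<^sub>t = x, U\<^sub>t = u)\<close>,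
  i.e. \<open>P(Q = {x}) \<le> p(x|u)\<close>; minimising over \<open>u\<close> gives \<open>P(Q = {x}) \<le> \<pi>\<^sub>t(x)\<close>.
  Privacy of \<open>X\<^sub>\<B>\<^sub>t\<close> implies the needed independence of \<open>U\<^sub>t\<close> and \<open>Q\<^sub>t\<close>,
  because \<open>U\<^sub>t\<close> is a function of \<open>X\<^sub>\<B>\<^sub>t\<close> and \<open>Q\<^sub>t\<close> one of \<open>(Q\<^sub>0, \<dots>, Q\<^sub>t)\<close>;
  the rate bound is then \<open>1/R\<^sub>t \<ge> \<bbbE>|Q\<^sub>t|\<close>.\<close>

instance req :: finite
proof
  have "(UNIV :: req set) = {A, B}"
    using req.exhaust by auto
  then show "finite (UNIV :: req set)"
    by (metis finite.emptyI finite_insert)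
qed

lemma (in prob_space) exists_value_pos_prob:
  fixes U :: "'a \<Rightarrow> 'b::finite"
  assumes "U \<in> measurable M (count_space UNIV)"
  shows "\<exists>u. 0 < prob {w \<in> space M. U w = u}"
proof (rule ccontr)
  assume "\<not> ?thesis"
  then have null: "prob {w \<in> space M. U w = u} = 0" for u
    by (meson measure_nonneg not_le order.antisym)
  have "(\<Union>u. {w \<in> space M. U w = u}) = space M"
    by auto
  then have "1 = prob (\<Union>u. {w \<in> space M. U w = u})"
    by (simp add: prob_space)
  also have "\<dots> \<le> (\<Sum>u\<in>UNIV. prob {w \<in> space M. U w = u})"
    using assms by (intro finite_measure_subadditive_finite) auto
  finally show False by (simp add: null)
qed

lemma (in prob_space) expectation_card_valid_query:
  assumes Q: "Q \<in> measurable M (count_space UNIV)"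
    and valid: "\<forall>w \<in> space M. valid_query (Q w)"
  shows "expectation (\<lambda>w. real (card (Q w)))
    = 2 - prob {w \<in> space M. Q w = {A}} - prob {w \<in> space M. Q w = {B}}"
proof -
  let ?QA = "{w \<in> space M. Q w = {A}}" and ?QB = "{w \<in> space M. Q w = {B}}"
  have ev: "?QA \<in> events" "?QB \<in> events"
    using Q by (auto intro: measurable_sets_Collect)
  have "expectation (\<lambda>w. real (card (Q w)))
      = expectation (\<lambda>w. 2 - indicator ?QA w - indicator ?QB w)"
    using valid by (intro Bochner_Integration.integral_cong) (auto simp: valid_query_def indicator_def)
  also have "\<dots> = 2 - prob ?QA - prob ?QB"
    using ev by (simp add: emeasure_eq_measure prob_space)
  finally show ?thesis .
qed

lemma measurable_Ut [measurable]:
  assumes "\<And>i. X i \<in> measurable M (count_space UNIV)"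
  shows "Ut F X t \<in> measurable M (count_space UNIV)"
proof -
  have "(\<lambda>w. (X (Fminus F t) w, X (Suc t) w)) \<in> measurable M (count_space UNIV \<Otimes>\<^sub>M count_space UNIV)"
    by (intro measurable_Pair assms)
  then show ?thesis
    by (simp add: Ut_def pair_measure_countable)
qed

lemma (in prob_space) prob_singleton_query_le_cond_p:
  assumes X: "\<And>i. X i \<in> measurable M (count_space UNIV)"
    and covers: "AE w in M. X t w \<in> Q w"
    and indep: "indep_rv M (count_space UNIV) (Ut F X t) (count_space UNIV) Q"
    and pos: "0 < prob {w \<in> space M. Ut F X t w = u}"
  shows "prob {w \<in> space M. Q w = {x}} \<le> cond_p M F X t x u"
proof -
  have "prob {w \<in> space M. Q w = {x}} * prob {w \<in> space M. Ut F X t w = u}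
      = prob {w \<in> space M. Ut F X t w = u \<and> Q w = {x}}"
    using indep[unfolded indep_rv_def, rule_format, of "{u}" "{{x}}"]
    by (simp add: vimage_def Int_def conj_commute mult.commute)
  also have "\<dots> \<le> prob {w \<in> space M. X t w = x \<and> Ut F X t w = u}"
  proof (rule finite_measure_mono_AE)
    show "AE w in M. w \<in> {w \<in> space M. Ut F X t w = u \<and> Q w = {x}}
        \<longrightarrow> w \<in> {w \<in> space M. X t w = x \<and> Ut F X t w = u}"
      using covers by eventually_elim auto
    show "{w \<in> space M. X t w = x \<and> Ut F X t w = u} \<in> events"
      using X by measurable
  qed
  finally show ?thesis
    using pos unfolding cond_p_def by (simp add: pos_le_divide_eq)
qed

lemma (in prob_space) prob_singleton_query_le_pi_t:
  assumes X: "\<And>i. X i \<in> measurable M (count_space UNIV)"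
    and covers: "AE w in M. X t w \<in> Q w"
    and indep: "indep_rv M (count_space UNIV) (Ut F X t) (count_space UNIV) Q"
  shows "prob {w \<in> space M. Q w = {x}} \<le> pi_t M F X t x"
  unfolding pi_t_def
proof (rule Min.boundedI)
  show "finite {cond_p M F X t x u | u. 0 < prob {w \<in> space M. Ut F X t w = u}}"
    by (rule finite_subset[of _ "range (cond_p M F X t x)"]) (blast, simp)
  show "{cond_p M F X t x u | u. 0 < prob {w \<in> space M. Ut F X t w = u}} \<noteq> {}"
    using exists_value_pos_prob[OF measurable_Ut[OF X]] by auto
qed (use prob_singleton_query_le_cond_p[OF assms] in auto)

lemma (in prob_space) expectation_card_query_ge:
  assumes X: "\<And>i. X i \<in> measurable M (count_space UNIV)"
    and Q: "Q \<in> measurable M (count_space UNIV)"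
    and valid: "\<forall>w \<in> space M. valid_query (Q w)"
    and covers: "AE w in M. X t w \<in> Q w"
    and indep: "indep_rv M (count_space UNIV) (Ut F X t) (count_space UNIV) Q"
  shows "expectation (\<lambda>w. real (card (Q w))) \<ge> 2 - pi_t M F X t A - pi_t M F X t B"
  using expectation_card_valid_query[OF Q valid]
    prob_singleton_query_le_pi_t[OF X covers indep, of A]
    prob_singleton_query_le_pi_t[OF X covers indep, of B]
  by linarith

lemma indep_rv_compose:
  assumes indep: "indep_rv M Ma X Mb Y"
    and f: "f \<in> measurable Ma Ma'" and g: "g \<in> measurable Mb Mb'"
    and X: "X \<in> space M \<rightarrow> space Ma" and Y: "Y \<in> space M \<rightarrow> space Mb"
  shows "indep_rv M Ma' (f \<circ> X) Mb' (g \<circ> Y)"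
  unfolding indep_rv_def
proof (intro ballI)
  fix S S' assume "S \<in> sets Ma'" "S' \<in> sets Mb'"
  then have "f -` S \<inter> space Ma \<in> sets Ma" "g -` S' \<inter> space Mb \<in> sets Mb"
    using f g by (auto intro: measurable_sets)
  moreover have "(f \<circ> X) -` S \<inter> space M = X -` (f -` S \<inter> space Ma) \<inter> space M"
    and "(g \<circ> Y) -` S' \<inter> space M = Y -` (g -` S' \<inter> space Mb) \<inter> space M"
    and "(f \<circ> X) -` S \<inter> (g \<circ> Y) -` S' \<inter> space M
      = X -` (f -` S \<inter> space Ma) \<inter> Y -` (g -` S' \<inter> space Mb) \<inter> space M"
    using X Y by auto
  ultimately show "measure M ((f \<circ> X) -` S \<inter> (g \<circ> Y) -` S' \<inter> space M)
      = measure M ((f \<circ> X) -` S \<inter> space M) * measure M ((g \<circ> Y) -` S' \<inter> space M)"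
    using indep unfolding indep_rv_def by (simp only:)
qed

lemma Fminus_in_Bset:
  assumes "F 0"
  shows "Fminus F t \<in> Bset F t"
proof -
  have "Fminus F t \<le> t \<and> F (Fminus F t)"
    unfolding Fminus_def by (rule GreatestI_nat[where k = 0 and b = t]) (use assms in auto)
  then show ?thesis
    unfolding Bset_def by auto
qed

lemma indep_rv_Ut_query_of_privacy:
  assumes "F 0"
    and privacy: "indep_rv M
      (PiM (Bset F t) (\<lambda>_. count_space UNIV)) (\<lambda>w. restrict (\<lambda>i. X i w) (Bset F t))
      (count_space UNIV) (\<lambda>w. map (\<lambda>i. Q i w) [0..<Suc t])"
  shows "indep_rv M (count_space UNIV) (Ut F X t) (count_space UNIV) (Q t)"
proof -
  have in_B: "Fminus F t \<in> Bset F t" "Suc t \<in> Bset F t"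
    using Fminus_in_Bset[of F t] assms(1) by (auto simp: Bset_def)
  let ?read_U = "\<lambda>x :: nat \<Rightarrow> req. (x (Fminus F t), x (Suc t))"
  have "?read_U \<in> measurable (PiM (Bset F t) (\<lambda>_. count_space UNIV)) (count_space UNIV \<Otimes>\<^sub>M count_space UNIV)"
    using in_B by (intro measurable_Pair measurable_component_singleton)
  then have "?read_U \<in> measurable (PiM (Bset F t) (\<lambda>_. count_space UNIV)) (count_space UNIV)"
    by (simp add: pair_measure_countable)
  moreover have "(\<lambda>qs. qs ! t) \<in> measurable (count_space UNIV) (count_space UNIV)"
    by simp
  ultimately have "indep_rv M (count_space UNIV) (?read_U \<circ> (\<lambda>w. restrict (\<lambda>i. X i w) (Bset F t)))
      (count_space UNIV) ((\<lambda>qs. qs ! t) \<circ> (\<lambda>w. map (\<lambda>i. Q i w) [0..<Suc t]))"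
    by (intro indep_rv_compose[OF privacy]) (auto simp: space_PiM)
  moreover have "?read_U \<circ> (\<lambda>w. restrict (\<lambda>i. X i w) (Bset F t)) = Ut F X t"
    using in_B by (auto simp: Ut_def)
  moreover have "(\<lambda>qs. qs ! t) \<circ> (\<lambda>w. map (\<lambda>i. Q i w) [0..<Suc t]) = Q t"
    by (auto simp del: upt_Suc)
  ultimately show ?thesis
    by simp
qed

lemma inverse_rate_ge_expected_cost:
  fixes L R E :: real
  assumes "0 < L" "0 < R" "R \<le> L / (L * E)"
  shows "E \<le> 1 / R"
proof -
  have "R \<le> 1 / E"
    using assms by simp
  with \<open>0 < R\<close> have "0 < E"
    by (metis divide_le_0_1_iff not_less order.trans)
  with \<open>R \<le> 1 / E\<close> \<open>0 < R\<close> show ?thesis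
    by (simp add: field_simps)
qed

theorem mainTheorem4:
  fixes M :: "'w measure" and X :: "nat \<Rightarrow> 'w \<Rightarrow> req" and T :: "req \<Rightarrow> req \<Rightarrow> real"
    and F :: "nat \<Rightarrow> bool" and t :: nat
  assumes "prob_space M"
    and "\<And>i. X i \<in> measurable M (count_space UNIV)"
    and "stochastic_matrix T"
    and "markov_chain M X T"
    and "F 0"
  shows
   "(\<forall>Qt :: 'w \<Rightarrow> req set.
        Qt \<in> measurable M (count_space UNIV)
      \<and> (\<forall>w \<in> space M. valid_query (Qt w))
      \<and> (AE w in M. X t w \<in> Qt w)
      \<and> indep_rv M (count_space UNIV) (Ut F X t) (count_space UNIV) Qt
      \<longrightarrow> prob_space.expectation M (\<lambda>w. real (card (Qt w)))
            \<ge> 2 - pi_t M F X t A - pi_t M F X t B)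
  \<and> (\<forall>(Q :: nat \<Rightarrow> 'w \<Rightarrow> req set) (L :: real) (R :: real).
        (\<forall>i. Q i \<in> measurable M (count_space UNIV))
      \<and> (\<forall>i. \<forall>w \<in> space M. valid_query (Q i w))
      \<and> (\<forall>i. AE w in M. X i w \<in> Q i w)
      \<and> indep_rv M
           (PiM (Bset F t) (\<lambda>_. count_space UNIV)) (\<lambda>w. restrict (\<lambda>i. X i w) (Bset F t))
           (count_space UNIV) (\<lambda>w. map (\<lambda>i. Q i w) [0..<Suc t])
      \<and> 0 < L \<and> 0 < R
      \<and> R \<le> L / (L * prob_space.expectation M (\<lambda>w. real (card (Q t w))))
      \<longrightarrow> 1 / R \<ge> 2 - pi_t M F X t A - pi_t M F X t B)"
proof (intro conjI allI impI)
  fix Qt :: "'w \<Rightarrow> req set"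
  assume "Qt \<in> measurable M (count_space UNIV)
      \<and> (\<forall>w \<in> space M. valid_query (Qt w))
      \<and> (AE w in M. X t w \<in> Qt w)
      \<and> indep_rv M (count_space UNIV) (Ut F X t) (count_space UNIV) Qt"
  then show "prob_space.expectation M (\<lambda>w. real (card (Qt w))) \<ge> 2 - pi_t M F X t A - pi_t M F X t B"
    by (intro prob_space.expectation_card_query_ge[OF assms(1)]) (use assms(2) in auto)
next
  fix Q :: "nat \<Rightarrow> 'w \<Rightarrow> req set" and L R :: real
  assume scheme: "(\<forall>i. Q i \<in> measurable M (count_space UNIV))
      \<and> (\<forall>i. \<forall>w \<in> space M. valid_query (Q i w))
      \<and> (\<forall>i. AE w in M. X i w \<in> Q i w)
      \<and> indep_rv M
           (PiM (Bset F t) (\<lambda>_. count_space UNIV)) (\<lambda>w. restrict (\<lambda>i. X i w) (Bset F t))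
           (count_space UNIV) (\<lambda>w. map (\<lambda>i. Q i w) [0..<Suc t])
      \<and> 0 < L \<and> 0 < R
      \<and> R \<le> L / (L * prob_space.expectation M (\<lambda>w. real (card (Q t w))))"
  then have "indep_rv M (count_space UNIV) (Ut F X t) (count_space UNIV) (Q t)"
    using indep_rv_Ut_query_of_privacy[of F] assms(5) by blast
  with scheme have "prob_space.expectation M (\<lambda>w. real (card (Q t w)))
      \<ge> 2 - pi_t M F X t A - pi_t M F X t B"
    by (intro prob_space.expectation_card_query_ge[OF assms(1)]) (use assms(2) in auto)
  moreover have "prob_space.expectation M (\<lambda>w. real (card (Q t w))) \<le> 1 / R"
    using scheme inverse_rate_ge_expected_cost by blast
  ultimately show "1 / R \<ge> 2 - pi_t M F X t A - pi_t M F X t B"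
    by linarith
qed

end
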